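(* Let $p$ be a monic real polynomial of degree $4$ all of whose roots lie in $\{z\in\mathbb C:\Re(z)<0\}$, and suppose $p$ has a non-real root $\alpha$. Then $(1/p(n))_{n\in\mathbb Z_+}$ is a Hausdorff moment sequence if and only if $p$ has a real root $r$ with $\Re(\alpha)\le r$.
   Context: A sequence $(x_n)_{n\in\mathbb Z_+}$ of positive numbers is a Hausdorff moment sequence if there is a positive Radon measure $\mu$ on $[0,1]$ with $x_n=\int_0^1 t^n\,d\mu(t)$ for all $n\in\mathbb Z_+$. *)

theory Defs
  imports "HOL-Analysis.Analysis" "HOL-Computational_Algebra.Polynomial"
begin

text \<open>Hausdorff moment sequence: there is a positive finite (hence Radon) Borel measure
  on [0,1] whose moments are the given numbers.\<close>
definition hausdorff_moment_seq :: "(nat \<Rightarrow> real) \<Rightarrow> bool" where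
  "hausdorff_moment_seq x \<longleftrightarrow>
     (\<forall>n. x n > 0) \<and>
     (\<exists>\<mu> :: real measure. sets \<mu> = sets (restrict_space borel {0..1}) \<and> finite_measure \<mu> \<and>
        (\<forall>n. x n = (\<integral>t. t ^ n \<partial>\<mu>)))"

end

theory Submission
  imports Defs "HOL-Real_Asymp.Real_Asymp"
begin

text \<open>
  If \<open>1/p(k) = \<integral>\<^sub>0\<^sup>\<infinity> e\<^sup>-\<^sup>k\<^sup>s G(s) ds\<close> for all \<open>k \<ge> 0\<close>, the substitution \<open>t = e\<^sup>-\<^sup>s\<close> shows that
  \<open>(1/p(n))\<close> is a Hausdorff moment sequence when \<open>G \<ge> 0\<close>; conversely, a moment sequence
  determines its measure (Weierstrass approximation), so a continuous \<open>G\<close> that is negative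
  somewhere rules it out. Write \<open>p(x) = ((x - c)\<^sup>2 + d\<^sup>2) q(x)\<close> with \<open>\<alpha> = c + i d\<close>.
  If \<open>q\<close> has a real root \<open>r \<ge> c\<close>, with other root \<open>r'\<close>, then \<open>1/p\<close> is the product of
  \<open>1/(x - r')\<close> and \<open>1/((x - r)((x - c)\<^sup>2 + d\<^sup>2))\<close>, both with nonnegative \<open>G\<close>, and
  moment sequences are closed under products. Otherwise \<open>G\<close> changes sign: if one
  conjugate pair has strictly larger real part, its term \<open>e\<^sup>c\<^sup>s(C cos ds + D sin ds)\<close>
  dominates; if both pairs have the same real part, \<open>G\<close> is an explicit trigonometric
  expression that is negative at a suitable point.
\<close>

section \<open>Laplace transforms on the half-line\<close>

lemma einterval_0_infinity: "einterval 0 \<infinity> = {0<..}"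
  by (auto simp: einterval_iff zero_ereal_def)

lemma has_bochner_integral_exp_Ioi:
  fixes a :: real assumes a: "0 < a"
  shows "has_bochner_integral lborel (\<lambda>s. indicator {0<..} s *\<^sub>R exp (- (a * s))) (1 / a)"
proof -
  let ?F = "\<lambda>s. - exp (- (a * s)) / a"
  have "DERIV ?F x :> exp (- (a * x))" for x
    using a by (auto intro!: derivative_eq_intros)
  moreover have "((?F \<circ> real_of_ereal) \<longlongrightarrow> - 1 / a) (at_right 0)"
    unfolding zero_ereal_def ereal_tendsto_simps using a by (auto intro!: tendsto_eq_intros)
  moreover have "((?F \<circ> real_of_ereal) \<longlongrightarrow> 0) (at_left \<infinity>)"
    unfolding ereal_tendsto_simps using a by real_asymp
  ultimately have "set_integrable lborel {0<..} (\<lambda>s. exp (- (a * s)))"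
    "(LBINT s=0..\<infinity>. exp (- (a * s))) = 0 - (- 1 / a)"
    using interval_integral_FTC_nonneg[of 0 \<infinity> ?F] by (auto simp: einterval_0_infinity)
  then show ?thesis
    by (simp add: has_bochner_integral_iff interval_lebesgue_integral_0_infty set_integrable_def
        set_lebesgue_integral_def)
qed

lemma has_bochner_integral_mult_exp_Ioi:
  fixes a :: real assumes a: "0 < a"
  shows "has_bochner_integral lborel (\<lambda>s. indicator {0<..} s *\<^sub>R (s * exp (- (a * s)))) (1 / a^2)"
proof -
  let ?F = "\<lambda>s. - exp (- (a * s)) * (s / a + 1 / a^2)"
  have "DERIV ?F x :> x * exp (- (a * x))" for x
    using a by (auto intro!: derivative_eq_intros simp: field_simps power2_eq_square)
  moreover have "((?F \<circ> real_of_ereal) \<longlongrightarrow> - 1 / a^2) (at_right 0)"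
    unfolding zero_ereal_def ereal_tendsto_simps using a by (auto intro!: tendsto_eq_intros)
  moreover have "((?F \<circ> real_of_ereal) \<longlongrightarrow> 0) (at_left \<infinity>)"
    unfolding ereal_tendsto_simps using a by real_asymp
  ultimately have "set_integrable lborel {0<..} (\<lambda>s. s * exp (- (a * s)))"
    "(LBINT s=0..\<infinity>. s * exp (- (a * s))) = 0 - (- 1 / a^2)"
    using interval_integral_FTC_nonneg[of 0 \<infinity> ?F]
    by (auto simp: einterval_0_infinity einterval_iff)
  then show ?thesis
    by (simp add: has_bochner_integral_iff interval_lebesgue_integral_0_infty set_integrable_def
        set_lebesgue_integral_def)
qed

lemma has_bochner_integral_cexp_Ioi:
  fixes w :: complex assumes w: "0 < Re w"
  shows "has_bochner_integral lborel (\<lambda>s. indicator {0<..} s *\<^sub>R exp (- (w * of_real s))) (1 / w)"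
proof -
  let ?F = "\<lambda>s. - exp (- (w * of_real s)) / w"
  have w0: "w \<noteq> 0" using w by auto
  have nrm: "norm (exp (- (w * of_real s))) = exp (- (Re w * s))" for s
    by (simp add: norm_exp)
  have int: "set_integrable lborel (einterval 0 \<infinity>) (\<lambda>s. exp (- (w * of_real s)))"
  proof (rule set_integrable_bound[where f="\<lambda>s. exp (- (Re w * s))"])
    show "set_integrable lborel (einterval 0 \<infinity>) (\<lambda>s. exp (- (Re w * s)))"
      using has_bochner_integral_exp_Ioi[OF w]
      by (simp add: set_integrable_def has_bochner_integral_iff einterval_0_infinity)
    show "set_borel_measurable lborel (einterval 0 \<infinity>) (\<lambda>s. exp (- (w * of_real s)))"
      unfolding set_borel_measurable_def by measurable
  qed (auto simp: nrm)
  have "(LBINT s=0..\<infinity>. exp (- (w * of_real s))) = 0 - (- 1 / w)"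
  proof (rule interval_integral_FTC_integrable[where F="?F"])
    show "(?F has_vector_derivative exp (- (w * of_real x))) (at x)" for x
      using w0 by (auto intro!: derivative_eq_intros has_vector_derivative_real_field)
    show "((?F \<circ> real_of_ereal) \<longlongrightarrow> (- 1 / w)) (at_right 0)"
      unfolding zero_ereal_def ereal_tendsto_simps using w0 by (auto intro!: tendsto_eq_intros)
    have *: "((\<lambda>t. exp (- (Re w * t))) \<longlongrightarrow> 0) at_top"
      using w by real_asymp
    have "(?F \<longlongrightarrow> 0) at_top"
      by (rule tendsto_norm_zero_cancel) (use * w0 in \<open>simp add: norm_divide nrm tendsto_divide_zero\<close>)
    then show "((?F \<circ> real_of_ereal) \<longlongrightarrow> 0) (at_left \<infinity>)"
      unfolding ereal_tendsto_simps .
  qed (auto simp: int)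
  then show ?thesis using int
    by (simp add: has_bochner_integral_iff interval_lebesgue_integral_0_infty set_integrable_def
        set_lebesgue_integral_def einterval_0_infinity)
qed

lemma has_bochner_integral_mult_cexp_Ioi:
  fixes w :: complex assumes w: "0 < Re w"
  shows "has_bochner_integral lborel
           (\<lambda>s. indicator {0<..} s *\<^sub>R (of_real s * exp (- (w * of_real s)))) (1 / w^2)"
proof -
  let ?F = "\<lambda>s. - exp (- (w * of_real s)) * (of_real s / w + 1 / w^2)"
  have w0: "w \<noteq> 0" using w by auto
  have nrm: "norm (of_real s * exp (- (w * of_real s))) = \<bar>s\<bar> * exp (- (Re w * s))" for s
    by (simp add: norm_exp norm_mult)
  have int: "set_integrable lborel (einterval 0 \<infinity>) (\<lambda>s. of_real s * exp (- (w * of_real s)))"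
  proof (rule set_integrable_bound[where f="\<lambda>s. s * exp (- (Re w * s))"])
    show "set_integrable lborel (einterval 0 \<infinity>) (\<lambda>s. s * exp (- (Re w * s)))"
      using has_bochner_integral_mult_exp_Ioi[OF w]
      by (simp add: set_integrable_def has_bochner_integral_iff einterval_0_infinity)
    show "set_borel_measurable lborel (einterval 0 \<infinity>) (\<lambda>s. of_real s * exp (- (w * of_real s)))"
      unfolding set_borel_measurable_def by measurable
  qed (auto simp: nrm einterval_iff)
  have "(LBINT s=0..\<infinity>. of_real s * exp (- (w * of_real s))) = 0 - (- 1 / w^2)"
  proof (rule interval_integral_FTC_integrable[where F="?F"])
    show "(?F has_vector_derivative (of_real x * exp (- (w * of_real x)))) (at x)" for x
      using w0
      by (auto intro!: derivative_eq_intros has_vector_derivative_real_field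
               simp: field_simps power2_eq_square)
    show "((?F \<circ> real_of_ereal) \<longlongrightarrow> (- 1 / w^2)) (at_right 0)"
      unfolding zero_ereal_def ereal_tendsto_simps using w0 by (auto intro!: tendsto_eq_intros)
    have *: "((\<lambda>t. exp (- (Re w * t)) * (\<bar>t\<bar> / norm w + 1 / norm w ^ 2)) \<longlongrightarrow> 0) at_top"
      using w w0 by real_asymp
    have "(?F \<longlongrightarrow> 0) at_top"
    proof (rule tendsto_norm_zero_cancel, rule Lim_null_comparison[OF _ *])
      show "\<forall>\<^sub>F x in at_top. norm (norm (?F x)) \<le> exp (- (Re w * x)) * (\<bar>x\<bar> / norm w + 1 / norm w ^ 2)"
        by (intro always_eventually allI)
           (auto simp: norm_mult norm_exp norm_divide norm_power intro!: mult_left_mono norm_triangle_le)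
    qed
    then show "((?F \<circ> real_of_ereal) \<longlongrightarrow> 0) (at_left \<infinity>)"
      unfolding ereal_tendsto_simps .
  qed (auto simp: int)
  then show ?thesis using int
    by (simp add: has_bochner_integral_iff interval_lebesgue_integral_0_infty set_integrable_def
        set_lebesgue_integral_def einterval_0_infinity)
qed

definition has_laplace :: "(real \<Rightarrow> real) \<Rightarrow> real \<Rightarrow> real \<Rightarrow> bool" where
  "has_laplace G k v \<longleftrightarrow>
     has_bochner_integral lborel (\<lambda>s. indicator {0<..} s * (exp (- (k * s)) * G s)) v"

lemma has_laplace_cong:
  "has_laplace G k v \<Longrightarrow> (\<And>s. s > 0 \<Longrightarrow> G s = H s) \<Longrightarrow> v = u \<Longrightarrow> has_laplace H k u"
  unfolding has_laplace_def
  by (erule has_bochner_integral_cong[THEN iffD1, rotated -1]) (auto simp: indicator_def)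

lemma has_laplace_add:
  "has_laplace G k v \<Longrightarrow> has_laplace H k u \<Longrightarrow> has_laplace (\<lambda>s. G s + H s) k (v + u)"
  unfolding has_laplace_def by (drule (1) has_bochner_integral_add) (simp add: algebra_simps)

lemma has_laplace_diff:
  "has_laplace G k v \<Longrightarrow> has_laplace H k u \<Longrightarrow> has_laplace (\<lambda>s. G s - H s) k (v - u)"
  unfolding has_laplace_def by (drule (1) has_bochner_integral_diff) (simp add: algebra_simps)

lemma has_laplace_cmult:
  assumes "has_laplace G k v" shows "has_laplace (\<lambda>s. a * G s) k (a * v)"
  using has_bochner_integral_mult_right[of a, OF assms[unfolded has_laplace_def]]
  unfolding has_laplace_def by (simp add: algebra_simps)

lemma has_laplace_integrable:
  "has_laplace G k v \<Longrightarrow> integrable lborel (\<lambda>s. indicator {0<..} s * (exp (- (k * s)) * G s))"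
  unfolding has_laplace_def by (simp add: has_bochner_integral_iff)

lemma has_laplace_exp_trig:
  fixes c d k :: real assumes "c < k"
  shows "has_laplace (\<lambda>s. exp (c * s) * cos (d * s)) k ((k - c) / ((k - c)^2 + d^2))"
    and "has_laplace (\<lambda>s. exp (c * s) * sin (d * s)) k (d / ((k - c)^2 + d^2))"
proof -
  define w where "w = Complex (k - c) (- d)"
  have I: "has_bochner_integral lborel (\<lambda>s. indicator {0<..} s *\<^sub>R exp (- (w * of_real s))) (1 / w)"
    using assms by (intro has_bochner_integral_cexp_Ioi) (simp add: w_def)
  have e: "exp (- (w * of_real s)) =
      of_real (exp (- (k * s)) * exp (c * s)) * (cos (d * s) + \<i> * sin (d * s))" for s
    by (simp add: w_def complex_eq_iff exp_add[symmetric] Re_exp Im_exp algebra_simps)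
  have "(k - c)^2 + d^2 \<noteq> 0" using assms by (simp add: sum_power2_eq_zero_iff)
  then have inv: "1 / w = Complex ((k - c) / ((k - c)^2 + d^2)) (d / ((k - c)^2 + d^2))"
    by (simp add: w_def complex_eq_iff Re_divide Im_divide power2_eq_square)
  show "has_laplace (\<lambda>s. exp (c * s) * cos (d * s)) k ((k - c) / ((k - c)^2 + d^2))"
    unfolding has_laplace_def
    by (rule has_bochner_integral_cong[THEN iffD1, rotated -1, OF has_bochner_integral_Re[OF I]])
       (simp_all add: e inv indicator_def)
  show "has_laplace (\<lambda>s. exp (c * s) * sin (d * s)) k (d / ((k - c)^2 + d^2))"
    unfolding has_laplace_def
    by (rule has_bochner_integral_cong[THEN iffD1, rotated -1, OF has_bochner_integral_Im[OF I]])
       (simp_all add: e inv indicator_def)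
qed

lemma has_laplace_mult_exp_cos:
  fixes c d k :: real assumes "c < k"
  shows "has_laplace (\<lambda>s. s * exp (c * s) * cos (d * s)) k
           (((k - c)^2 - d^2) / ((k - c)^2 + d^2)^2)"
proof -
  define w where "w = Complex (k - c) (- d)"
  have I: "has_bochner_integral lborel
      (\<lambda>s. indicator {0<..} s *\<^sub>R (of_real s * exp (- (w * of_real s)))) (1 / w^2)"
    using assms by (intro has_bochner_integral_mult_cexp_Ioi) (simp add: w_def)
  have e: "of_real s * exp (- (w * of_real s)) =
      of_real (s * exp (- (k * s)) * exp (c * s)) * (cos (d * s) + \<i> * sin (d * s))" for s
    by (simp add: w_def complex_eq_iff exp_add[symmetric] Re_exp Im_exp algebra_simps)
  have "(k - c)^2 + d^2 \<noteq> 0" using assms by (simp add: sum_power2_eq_zero_iff)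
  then have re: "Re (1 / w^2) = ((k - c)^2 - d^2) / ((k - c)^2 + d^2)^2"
    by (simp add: w_def Re_divide power2_eq_square field_simps)
  show ?thesis
    unfolding has_laplace_def
    by (rule has_bochner_integral_cong[THEN iffD1, rotated -1, OF has_bochner_integral_Re[OF I]])
       (simp_all add: e re indicator_def)
qed

lemma has_laplace_exp: "c < k \<Longrightarrow> has_laplace (\<lambda>s. exp (c * s)) k (1 / (k - c))"
  using has_laplace_exp_trig(1)[of c k 0] by (simp add: power2_eq_square)

lemma has_laplace_mult_exp: "c < k \<Longrightarrow> has_laplace (\<lambda>s. s * exp (c * s)) k (1 / (k - c)^2)"
  using has_laplace_mult_exp_cos[of c k 0] by (simp add: power2_eq_square)

lemma has_laplace_exp_pair:
  fixes \<rho>\<^sub>1 \<rho>\<^sub>2 k E F :: real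
  assumes "\<rho>\<^sub>1 \<noteq> \<rho>\<^sub>2" "\<rho>\<^sub>1 < k" "\<rho>\<^sub>2 < k"
  shows "has_laplace
           (\<lambda>s. (E * \<rho>\<^sub>1 + F) / (\<rho>\<^sub>1 - \<rho>\<^sub>2) * exp (\<rho>\<^sub>1 * s) + (E * \<rho>\<^sub>2 + F) / (\<rho>\<^sub>2 - \<rho>\<^sub>1) * exp (\<rho>\<^sub>2 * s))
           k ((E * k + F) / ((k - \<rho>\<^sub>1) * (k - \<rho>\<^sub>2)))"
proof (rule has_laplace_cong)
  show "has_laplace
           (\<lambda>s. (E * \<rho>\<^sub>1 + F) / (\<rho>\<^sub>1 - \<rho>\<^sub>2) * exp (\<rho>\<^sub>1 * s) + (E * \<rho>\<^sub>2 + F) / (\<rho>\<^sub>2 - \<rho>\<^sub>1) * exp (\<rho>\<^sub>2 * s))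
           k ((E * \<rho>\<^sub>1 + F) / (\<rho>\<^sub>1 - \<rho>\<^sub>2) * (1 / (k - \<rho>\<^sub>1)) + (E * \<rho>\<^sub>2 + F) / (\<rho>\<^sub>2 - \<rho>\<^sub>1) * (1 / (k - \<rho>\<^sub>2)))"
    using assms by (intro has_laplace_add has_laplace_cmult has_laplace_exp)
  have "\<rho>\<^sub>1 - \<rho>\<^sub>2 \<noteq> 0" "\<rho>\<^sub>2 - \<rho>\<^sub>1 \<noteq> 0" "k - \<rho>\<^sub>1 \<noteq> 0" "k - \<rho>\<^sub>2 \<noteq> 0" using assms by auto
  then show "(E * \<rho>\<^sub>1 + F) / (\<rho>\<^sub>1 - \<rho>\<^sub>2) * (1 / (k - \<rho>\<^sub>1)) + (E * \<rho>\<^sub>2 + F) / (\<rho>\<^sub>2 - \<rho>\<^sub>1) * (1 / (k - \<rho>\<^sub>2))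
      = (E * k + F) / ((k - \<rho>\<^sub>1) * (k - \<rho>\<^sub>2))"
    by (simp add: divide_simps) (simp add: algebra_simps)
qed simp

lemma has_laplace_exp_double:
  fixes \<rho> k E F :: real
  assumes "\<rho> < k"
  shows "has_laplace (\<lambda>s. E * exp (\<rho> * s) + (E * \<rho> + F) * (s * exp (\<rho> * s))) k
           ((E * k + F) / (k - \<rho>)^2)"
proof (rule has_laplace_cong)
  show "has_laplace (\<lambda>s. E * exp (\<rho> * s) + (E * \<rho> + F) * (s * exp (\<rho> * s))) k
           (E * (1 / (k - \<rho>)) + (E * \<rho> + F) * (1 / (k - \<rho>)^2))"
    using assms by (intro has_laplace_add has_laplace_cmult has_laplace_exp has_laplace_mult_exp)
  show "E * (1 / (k - \<rho>)) + (E * \<rho> + F) * (1 / (k - \<rho>)^2) = (E * k + F) / (k - \<rho>)^2"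
    using assms by (simp add: divide_simps power2_eq_square) (simp add: algebra_simps)
qed simp

lemma has_laplace_exp_cos_sin:
  fixes c d k E F :: real
  assumes "d \<noteq> 0" "c < k"
  shows "has_laplace (\<lambda>s. exp (c * s) * (E * cos (d * s) + (E * c + F) / d * sin (d * s))) k
           ((E * k + F) / ((k - c)^2 + d^2))"
proof (rule has_laplace_cong)
  show "has_laplace (\<lambda>s. E * (exp (c * s) * cos (d * s)) + (E * c + F) / d * (exp (c * s) * sin (d * s))) k
           (E * ((k - c) / ((k - c)^2 + d^2)) + (E * c + F) / d * (d / ((k - c)^2 + d^2)))"
    using assms by (intro has_laplace_add has_laplace_cmult has_laplace_exp_trig)
  show "E * ((k - c) / ((k - c)^2 + d^2)) + (E * c + F) / d * (d / ((k - c)^2 + d^2))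
      = (E * k + F) / ((k - c)^2 + d^2)"
    using assms by (simp add: divide_simps add_nonneg_pos) (simp add: algebra_simps)
qed (simp add: algebra_simps)

section \<open>Moment sequences given by Laplace transforms\<close>

lemma space_eq_if_sets_restrict_space:
  fixes S :: "'a::topological_space set"
  shows "sets \<mu> = sets (restrict_space borel S) \<Longrightarrow> space \<mu> = S"
  by (drule sets_eq_imp_space_eq) (simp add: space_restrict_space)

lemma borel_measurable_if_sets_restrict_space:
  fixes S :: "'a::topological_space set"
  assumes "sets \<mu> = sets (restrict_space borel S)" "f \<in> borel_measurable borel"
  shows "f \<in> borel_measurable \<mu>"
  using measurable_restrict_space1[OF assms(2), of S] by (subst measurable_cong_sets[OF assms(1) refl])

lemma hausdorff_moment_seq_mult:
  assumes "hausdorff_moment_seq x" "hausdorff_moment_seq y"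
  shows "hausdorff_moment_seq (\<lambda>n. x n * y n)"
proof -
  obtain \<mu>\<^sub>1 where s1: "sets \<mu>\<^sub>1 = sets (restrict_space borel {0..1::real})" and f1: "finite_measure \<mu>\<^sub>1"
    and m1: "\<And>n. x n = (\<integral>t. t ^ n \<partial>\<mu>\<^sub>1)" and p1: "\<And>n. x n > 0"
    using assms(1) unfolding hausdorff_moment_seq_def by blast
  obtain \<mu>\<^sub>2 where s2: "sets \<mu>\<^sub>2 = sets (restrict_space borel {0..1::real})" and f2: "finite_measure \<mu>\<^sub>2"
    and m2: "\<And>n. y n = (\<integral>t. t ^ n \<partial>\<mu>\<^sub>2)" and p2: "\<And>n. y n > 0"
    using assms(2) unfolding hausdorff_moment_seq_def by blast
  interpret F1: finite_measure \<mu>\<^sub>1 by (rule f1)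
  interpret F2: finite_measure \<mu>\<^sub>2 by (rule f2)
  interpret P: pair_sigma_finite \<mu>\<^sub>1 \<mu>\<^sub>2 ..
  have sp: "space \<mu>\<^sub>1 = {0..1}" "space \<mu>\<^sub>2 = {0..1}"
    using s1 s2 by (auto dest: space_eq_if_sets_restrict_space)
  have [measurable]: "(\<lambda>t. t) \<in> borel_measurable \<mu>\<^sub>1" "(\<lambda>t. t) \<in> borel_measurable \<mu>\<^sub>2"
    by (simp_all add: borel_measurable_if_sets_restrict_space[OF s1] borel_measurable_if_sets_restrict_space[OF s2])
  let ?\<rho> = "\<lambda>(s::real, t::real). s * t"
  have \<rho>: "?\<rho> \<in> measurable (\<mu>\<^sub>1 \<Otimes>\<^sub>M \<mu>\<^sub>2) (restrict_space borel {0..1})"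
    by (rule measurable_restrict_space2) (auto simp: space_pair_measure sp mult_le_one)
  define \<mu> where "\<mu> = distr (\<mu>\<^sub>1 \<Otimes>\<^sub>M \<mu>\<^sub>2) (restrict_space borel {0..1}) ?\<rho>"
  have "(\<integral>t. t ^ n \<partial>\<mu>) = x n * y n" for n
  proof -
    have int: "integrable (\<mu>\<^sub>1 \<Otimes>\<^sub>M \<mu>\<^sub>2) (\<lambda>(s, t). (s * t) ^ n)"
    proof (rule finite_measure.integrable_const_bound[where B=1])
      show "AE z in \<mu>\<^sub>1 \<Otimes>\<^sub>M \<mu>\<^sub>2. norm ((\<lambda>(s, t). (s * t) ^ n) z) \<le> 1"
        by (intro AE_I2)
           (auto simp: space_pair_measure sp abs_mult power_mult_distrib intro!: power_le_one mult_le_one)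
      show "finite_measure (\<mu>\<^sub>1 \<Otimes>\<^sub>M \<mu>\<^sub>2)" by (intro finite_measure_pair_measure f1 f2)
    qed measurable
    have "(\<integral>t. t ^ n \<partial>\<mu>) = (\<integral>z. ?\<rho> z ^ n \<partial>(\<mu>\<^sub>1 \<Otimes>\<^sub>M \<mu>\<^sub>2))"
      unfolding \<mu>_def by (rule integral_distr[OF \<rho>]) (rule measurable_restrict_space1, measurable)
    also have "\<dots> = (\<integral>s. (\<integral>t. (s * t) ^ n \<partial>\<mu>\<^sub>2) \<partial>\<mu>\<^sub>1)"
      using P.integral_fst'[OF int] by (simp add: case_prod_beta')
    also have "\<dots> = x n * y n"
      by (simp add: power_mult_distrib m1 m2)
    finally show ?thesis .
  qed
  moreover have "finite_measure \<mu>"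
    unfolding \<mu>_def by (intro finite_measure.finite_measure_distr finite_measure_pair_measure f1 f2 \<rho>)
  moreover have "sets \<mu> = sets (restrict_space borel {0..1})" by (simp add: \<mu>_def)
  ultimately show ?thesis
    unfolding hausdorff_moment_seq_def using p1 p2 by (metis mult_pos_pos)
qed

text \<open>The measure is the image of \<open>G(s) ds\<close> on \<open>(0, \<infinity>)\<close> under \<open>s \<mapsto> e\<^sup>-\<^sup>s\<close>.\<close>
lemma hausdorff_moment_seq_if_laplace_nonneg:
  fixes G :: "real \<Rightarrow> real" and x :: "nat \<Rightarrow> real"
  assumes Gm: "G \<in> borel_measurable borel"
    and Gnn: "\<And>s. s > 0 \<Longrightarrow> G s \<ge> 0"
    and lap: "\<And>n. has_laplace G (real n) (x n)"
    and pos: "\<And>n. x n > 0"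
  shows "hausdorff_moment_seq x"
proof -
  define g where "g s = indicator {0<..} s * G s" for s :: real
  have [measurable]: "g \<in> borel_measurable borel" unfolding g_def using Gm by measurable
  have gnn: "0 \<le> g s" for s using Gnn by (auto simp: g_def indicator_def)
  define \<nu> where "\<nu> = density lborel (\<lambda>s. ennreal (g s))"
  define \<phi> where "\<phi> s = exp (- \<bar>s\<bar>)" for s :: real
    \<comment> \<open>the absolute value only makes \<open>\<phi>\<close> map all of \<open>\<real>\<close> into \<open>[0, 1]\<close>; \<open>g\<close> vanishes on \<open>s \<le> 0\<close>\<close>
  have \<phi>: "\<phi> \<in> measurable \<nu> (restrict_space borel {0..1})"
    unfolding \<nu>_def \<phi>_def by (rule measurable_restrict_space2) auto
  define \<mu> where "\<mu> = distr \<nu> (restrict_space borel {0..1}) \<phi>"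
  have "(\<integral>t. t ^ n \<partial>\<mu>) = x n" for n
  proof -
    have "(\<integral>t. t ^ n \<partial>\<mu>) = (\<integral>s. \<phi> s ^ n \<partial>\<nu>)"
      unfolding \<mu>_def by (rule integral_distr[OF \<phi>]) (rule measurable_restrict_space1, measurable)
    also have "\<dots> = (\<integral>s. g s * \<phi> s ^ n \<partial>lborel)"
      unfolding \<nu>_def by (subst integral_density) (auto simp: gnn \<phi>_def)
    also have "\<dots> = (\<integral>s. indicator {0<..} s * (exp (- (real n * s)) * G s) \<partial>lborel)"
      by (rule Bochner_Integration.integral_cong)
         (auto simp: g_def \<phi>_def indicator_def exp_of_nat_mult[symmetric] mult_ac)
    also have "\<dots> = x n"
      using lap[of n] unfolding has_laplace_def by (simp add: has_bochner_integral_iff)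
    finally show ?thesis .
  qed
  moreover have "finite_measure \<mu>"
  proof
    have "emeasure \<mu> (space \<mu>) = emeasure \<nu> (\<phi> -` {0..1} \<inter> space \<nu>)"
      unfolding \<mu>_def using emeasure_distr[OF \<phi> sets.top] by (simp add: space_restrict_space)
    also have "\<phi> -` {0..1} = UNIV" by (auto simp: \<phi>_def)
    also have "emeasure \<nu> (UNIV \<inter> space \<nu>) = (\<integral>\<^sup>+s. ennreal (g s) \<partial>lborel)"
      by (simp add: \<nu>_def emeasure_density)
    also have "\<dots> = ennreal (\<integral>s. g s \<partial>lborel)"
      using has_laplace_integrable[OF lap[of 0]] gnn
      by (intro nn_integral_eq_integral) (auto simp: g_def)
    finally show "emeasure \<mu> (space \<mu>) \<noteq> \<infinity>" by simp
  qed
  moreover have "sets \<mu> = sets (restrict_space borel {0..1})" by (simp add: \<mu>_def)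
  ultimately show ?thesis
    unfolding hausdorff_moment_seq_def using pos by metis
qed

lemma integrable_laplace_comp_exp:
  fixes G \<psi> :: "real \<Rightarrow> real"
  assumes lap: "has_laplace G 0 v" and \<psi>: "continuous_on UNIV \<psi>"
  shows "integrable lborel (\<lambda>s. indicator {0<..} s * (\<psi> (exp (- s)) * G s))"
proof -
  have intG: "integrable lborel (\<lambda>s. indicator {0<..} s * G s)"
    using has_laplace_integrable[OF lap] by simp
  obtain B where "B \<ge> 0" and B: "\<And>t. t \<in> {0..1} \<Longrightarrow> \<bar>\<psi> t\<bar> \<le> B"
    using continuous_on_compact_bound[OF compact_Icc continuous_on_subset[OF \<psi>], of 0 1] by auto
  have [measurable]: "\<psi> \<in> borel_measurable borel" using \<psi> by (rule borel_measurable_continuous_onI)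
  show ?thesis
  proof (rule Bochner_Integration.integrable_bound[OF integrable_mult_right[OF intG, of B]])
    have "(\<lambda>s. \<psi> (exp (- s)) * (indicator {0<..} s * G s)) \<in> borel_measurable lborel"
      using borel_measurable_integrable[OF intG] by measurable
    then show "(\<lambda>s. indicator {0<..} s * (\<psi> (exp (- s)) * G s)) \<in> borel_measurable lborel"
      by (simp add: mult.left_commute)
    show "AE s in lborel. norm (indicator {0<..} s * (\<psi> (exp (- s)) * G s))
                          \<le> norm (B * (indicator {0<..} s * G s))"
      using B \<open>B \<ge> 0\<close>
      by (intro AE_I2) (auto simp: indicator_def abs_mult less_imp_le intro!: mult_right_mono)
  qed
qed

lemma integrable_continuous_if_sets_Icc:
  fixes \<mu> :: "real measure" and \<psi> :: "real \<Rightarrow> real"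
  assumes sets: "sets \<mu> = sets (restrict_space borel {a..b})" and "finite_measure \<mu>"
    and \<psi>: "continuous_on UNIV \<psi>"
  shows "integrable \<mu> \<psi>"
proof -
  obtain B where B: "\<And>t. t \<in> {a..b} \<Longrightarrow> \<bar>\<psi> t\<bar> \<le> B"
    using continuous_on_compact_bound[OF compact_Icc continuous_on_subset[OF \<psi>], of a b] by auto
  have "\<psi> \<in> borel_measurable borel" using \<psi> by (rule borel_measurable_continuous_onI)
  then show ?thesis
    using B space_eq_if_sets_restrict_space[OF sets]
    by (intro finite_measure.integrable_const_bound[where B=B] \<open>finite_measure \<mu>\<close> AE_I2
        borel_measurable_if_sets_restrict_space[OF sets]) auto
qed

lemma integral_polynomial_moments:
  fixes \<mu> :: "real measure"
  assumes "sets \<mu> = sets (restrict_space borel {0..1})" "finite_measure \<mu>"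
    and mom: "\<And>n. x n = (\<integral>t. t ^ n \<partial>\<mu>)"
  shows "(\<integral>t. (\<Sum>i\<le>N. a i * t ^ i) \<partial>\<mu>) = (\<Sum>i\<le>N. a i * x i)"
proof -
  have "integrable \<mu> (\<lambda>t. t ^ i)" for i
    using assms(1,2) by (rule integrable_continuous_if_sets_Icc) (intro continuous_intros)
  then show ?thesis by (subst Bochner_Integration.integral_sum) (auto simp: mom)
qed

lemma has_bochner_integral_polynomial_laplace:
  fixes G :: "real \<Rightarrow> real"
  assumes lap: "\<And>n. has_laplace G (real n) (x n)"
  shows "has_bochner_integral lborel
           (\<lambda>s. indicator {0<..} s * ((\<Sum>i\<le>N. a i * exp (- s) ^ i) * G s)) (\<Sum>i\<le>N. a i * x i)"
proof -
  have "has_bochner_integral lborel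
      (\<lambda>s. \<Sum>i\<le>N. a i * (indicator {0<..} s * (exp (- (real i * s)) * G s))) (\<Sum>i\<le>N. a i * x i)"
    using lap unfolding has_laplace_def by (intro has_bochner_integral_sum has_bochner_integral_mult_right)
  moreover have "(\<lambda>s. \<Sum>i\<le>N. a i * (indicator {0<..} s * (exp (- (real i * s)) * G s))) =
      (\<lambda>s. indicator {0<..} s * ((\<Sum>i\<le>N. a i * exp (- s) ^ i) * G s))"
    by (auto simp: sum_distrib_left sum_distrib_right mult_ac exp_of_nat_mult[symmetric])
  ultimately show ?thesis by simp
qed

lemma moment_laplace_integral_diff_bound:
  fixes \<mu> :: "real measure" and G \<psi> :: "real \<Rightarrow> real"
  assumes sets: "sets \<mu> = sets (restrict_space borel {0..1})" and fin: "finite_measure \<mu>"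
    and mom: "\<And>n. x n = (\<integral>t. t ^ n \<partial>\<mu>)"
    and lap: "\<And>n. has_laplace G (real n) (x n)"
    and \<psi>: "continuous_on UNIV \<psi>" and \<delta>: "\<And>t. t \<in> {0..1} \<Longrightarrow> \<bar>\<psi> t\<bar> \<le> \<delta>"
  shows "\<bar>(\<integral>t. \<psi> t \<partial>\<mu>) - (\<integral>s. indicator {0<..} s * (\<psi> (exp (- s)) * G s) \<partial>lborel)\<bar>
           \<le> \<delta> * (x 0 + (\<integral>s. \<bar>indicator {0<..} s * G s\<bar> \<partial>lborel))"
proof -
  interpret finite_measure \<mu> by (rule fin)
  have intG: "integrable lborel (\<lambda>s. indicator {0<..} s * G s)"
    using has_laplace_integrable[OF lap[of 0]] by simp
  have "\<bar>\<integral>t. \<psi> t \<partial>\<mu>\<bar> \<le> (\<integral>t. \<delta> \<partial>\<mu>)"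
    using \<delta> integrable_continuous_if_sets_Icc[OF sets fin \<psi>]
    by (intro integral_abs_bound_integral) (auto simp: space_eq_if_sets_restrict_space[OF sets])
  also have "(\<integral>t. \<delta> \<partial>\<mu>) = \<delta> * x 0" using mom[of 0] by simp
  finally have "\<bar>\<integral>t. \<psi> t \<partial>\<mu>\<bar> \<le> \<delta> * x 0" .
  moreover have "\<bar>\<integral>s. indicator {0<..} s * (\<psi> (exp (- s)) * G s) \<partial>lborel\<bar>
      \<le> (\<integral>s. \<delta> * \<bar>indicator {0<..} s * G s\<bar> \<partial>lborel)"
    using integrable_laplace_comp_exp[OF lap[of 0, simplified] \<psi>]
      integrable_mult_right[OF integrable_abs[OF intG]] \<delta>
    by (intro integral_abs_bound_integral) (auto simp: indicator_def abs_mult intro!: mult_right_mono)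
  ultimately show ?thesis by (simp add: distrib_left)
qed

text \<open>The Weierstrass approximation theorem extends the identity from monomials to all
  continuous functions.\<close>
lemma moment_integral_eq_laplace_integral:
  fixes \<mu> :: "real measure" and G \<phi> :: "real \<Rightarrow> real"
  assumes sets: "sets \<mu> = sets (restrict_space borel {0..1})" and fin: "finite_measure \<mu>"
    and mom: "\<And>n. x n = (\<integral>t. t ^ n \<partial>\<mu>)"
    and lap: "\<And>n. has_laplace G (real n) (x n)"
    and \<phi>: "continuous_on UNIV \<phi>"
  shows "(\<integral>t. \<phi> t \<partial>\<mu>) = (\<integral>s. indicator {0<..} s * (\<phi> (exp (- s)) * G s) \<partial>lborel)"
proof -
  define L where "L \<psi> = (\<integral>t. \<psi> t \<partial>\<mu>) - (\<integral>s. indicator {0<..} s * (\<psi> (exp (- s)) * G s) \<partial>lborel)"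
    for \<psi>
  define C where "C = x 0 + (\<integral>s. \<bar>indicator {0<..} s * G s\<bar> \<partial>lborel)"
  have "C \<ge> 0" using mom[of 0] by (simp add: C_def)
  have "\<bar>L \<phi>\<bar> \<le> 0 + \<epsilon>" if "\<epsilon> > 0" for \<epsilon>
  proof -
    define \<delta> where "\<delta> = \<epsilon> / (C + 1)"
    have "\<delta> > 0" using \<open>C \<ge> 0\<close> that by (simp add: \<delta>_def)
    then obtain P where "real_polynomial_function P" and P: "\<And>t. t \<in> {0..1} \<Longrightarrow> \<bar>\<phi> t - P t\<bar> < \<delta>"
      using Stone_Weierstrass_real_polynomial_function[OF compact_Icc continuous_on_subset[OF \<phi>]]
      by blast
    then obtain a N where PN: "P = (\<lambda>t. \<Sum>i\<le>N. a i * t ^ i)"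
      using real_polynomial_function_imp_sum by blast
    have "continuous_on UNIV P" unfolding PN by (intro continuous_intros)
    have "L P = 0"
      using integral_polynomial_moments[OF sets fin mom] has_bochner_integral_polynomial_laplace[OF lap]
      by (simp add: L_def PN has_bochner_integral_iff)
    then have "L \<phi> = L (\<lambda>t. \<phi> t - P t)"
      using integrable_continuous_if_sets_Icc[OF sets fin] integrable_laplace_comp_exp[OF lap[of 0, simplified]]
        \<phi> \<open>continuous_on UNIV P\<close>
      by (simp add: L_def left_diff_distrib right_diff_distrib)
    also have "\<bar>L (\<lambda>t. \<phi> t - P t)\<bar> \<le> \<delta> * C"
      unfolding L_def C_def using \<phi> \<open>continuous_on UNIV P\<close> P
      by (intro moment_laplace_integral_diff_bound[OF sets fin mom lap])
         (auto intro!: continuous_intros less_imp_le)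
    also have "\<dots> \<le> \<epsilon>" using \<open>C \<ge> 0\<close> that by (simp add: \<delta>_def field_simps)
    finally show ?thesis by simp
  qed
  then have "\<bar>L \<phi>\<bar> \<le> 0" by (rule field_le_epsilon)
  then show ?thesis by (simp add: L_def)
qed

lemma continuous_on_less_near:
  fixes h :: "real \<Rightarrow> real"
  assumes "continuous_on UNIV h" "h s\<^sub>0 < b"
  obtains \<rho> where "\<rho> > 0" "\<And>s. \<bar>s - s\<^sub>0\<bar> < \<rho> \<Longrightarrow> h s < b"
proof -
  have "(h \<longlongrightarrow> h s\<^sub>0) (nhds s\<^sub>0)"
    using assms(1) by (simp add: continuous_on_eq_continuous_at isCont_def tendsto_at_iff_tendsto_nhds)
  then have "\<forall>\<^sub>F s in nhds s\<^sub>0. h s < b" using assms(2) by (rule order_tendstoD)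
  then show ?thesis using that unfolding eventually_nhds_metric dist_real_def by blast
qed

lemma integral_Ioi_neg_if_continuous:
  fixes h :: "real \<Rightarrow> real"
  assumes h: "continuous_on UNIV h" "integrable lborel (\<lambda>s. indicator {0<..} s * h s)"
    and nonpos: "\<And>s. s > 0 \<Longrightarrow> h s \<le> 0" and s\<^sub>0: "s\<^sub>0 > 0" "h s\<^sub>0 < 0"
  shows "(\<integral>s. indicator {0<..} s * h s \<partial>lborel) < 0"
proof -
  obtain \<rho>\<^sub>0 where "\<rho>\<^sub>0 > 0" and \<rho>\<^sub>0: "\<And>s. \<bar>s - s\<^sub>0\<bar> < \<rho>\<^sub>0 \<Longrightarrow> h s < h s\<^sub>0 / 2"
    using continuous_on_less_near[OF h(1), of s\<^sub>0 "h s\<^sub>0 / 2"] s\<^sub>0 by auto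
  define \<rho> where "\<rho> = min \<rho>\<^sub>0 s\<^sub>0"
  have "\<rho> > 0" using \<open>\<rho>\<^sub>0 > 0\<close> s\<^sub>0 by (simp add: \<rho>_def)
  have "(\<integral>s. indicator {0<..} s * h s \<partial>lborel) \<le>
        (\<integral>s. indicator {s\<^sub>0 - \<rho>/2 .. s\<^sub>0 + \<rho>/2} s * (h s\<^sub>0 / 2) \<partial>lborel)"
  proof (rule integral_mono[OF h(2)])
    show "integrable lborel (\<lambda>s. indicator {s\<^sub>0 - \<rho>/2 .. s\<^sub>0 + \<rho>/2} s * (h s\<^sub>0 / 2))"
      by (intro integrable_mult_left integrable_real_indicator) (simp_all add: emeasure_lborel_Icc_eq)
    show "indicator {0<..} s * h s \<le> indicator {s\<^sub>0 - \<rho>/2 .. s\<^sub>0 + \<rho>/2} s * (h s\<^sub>0 / 2)" for s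
      using \<rho>\<^sub>0[of s] nonpos[of s] \<open>\<rho> > 0\<close> s\<^sub>0
      by (auto simp: indicator_def \<rho>_def less_imp_le)
  qed
  also have "\<dots> = \<rho> * h s\<^sub>0 / 2" using \<open>\<rho> > 0\<close> by simp
  also have "\<dots> < 0" using \<open>\<rho> > 0\<close> s\<^sub>0 by (simp add: mult_pos_neg)
  finally show ?thesis .
qed

text \<open>Test the moment functional against a bump supported where \<open>G(-ln t) < 0\<close>.\<close>
lemma not_hausdorff_moment_seq_if_laplace_neg:
  fixes G :: "real \<Rightarrow> real" and x :: "nat \<Rightarrow> real"
  assumes G: "continuous_on UNIV G" and lap: "\<And>n. has_laplace G (real n) (x n)"
    and s\<^sub>0: "s\<^sub>0 > 0" "G s\<^sub>0 < 0"
  shows "\<not> hausdorff_moment_seq x"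
proof
  assume "hausdorff_moment_seq x"
  then obtain \<mu> where sets: "sets \<mu> = sets (restrict_space borel {0..1::real})"
    and fin: "finite_measure \<mu>" and mom: "\<And>n. x n = (\<integral>t. t ^ n \<partial>\<mu>)"
    unfolding hausdorff_moment_seq_def by blast
  obtain \<eta> where "\<eta> > 0" and \<eta>: "\<And>s. \<bar>s - s\<^sub>0\<bar> < \<eta> \<Longrightarrow> G s < 0"
    using continuous_on_less_near[OF G s\<^sub>0(2)] by blast
  define \<phi> where "\<phi> t = max 0 (min (t - exp (- (s\<^sub>0 + \<eta>))) (exp (- (s\<^sub>0 - \<eta>)) - t))" for t
  have \<phi>c: "continuous_on UNIV \<phi>" unfolding \<phi>_def by (intro continuous_intros)
  have G_neg: "G s < 0" if "\<phi> (exp (- s)) > 0" for s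
  proof -
    have "exp (- (s\<^sub>0 + \<eta>)) < exp (- s)" "exp (- s) < exp (- (s\<^sub>0 - \<eta>))"
      using that by (auto simp: \<phi>_def less_max_iff_disj)
    then show ?thesis by (intro \<eta>) auto
  qed
  define h where "h s = \<phi> (exp (- s)) * G s" for s
  have h_nonpos: "h s \<le> 0" for s
    using G_neg[of s] by (cases "\<phi> (exp (- s)) > 0") (auto simp: h_def \<phi>_def mult_pos_neg less_imp_le)
  have "h s\<^sub>0 < 0"
    using s\<^sub>0 \<open>\<eta> > 0\<close> by (simp add: h_def \<phi>_def mult_pos_neg)
  moreover have "continuous_on UNIV h"
    unfolding h_def by (intro continuous_intros continuous_on_compose2[OF \<phi>c] G) auto
  moreover have "integrable lborel (\<lambda>s. indicator {0<..} s * h s)"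
    using integrable_laplace_comp_exp[OF lap[of 0, simplified] \<phi>c] by (simp add: h_def)
  ultimately have "(\<integral>s. indicator {0<..} s * h s \<partial>lborel) < 0"
    using s\<^sub>0 h_nonpos by (intro integral_Ioi_neg_if_continuous)
  moreover have "(\<integral>t. \<phi> t \<partial>\<mu>) \<ge> 0" by (simp add: \<phi>_def)
  ultimately show False
    using moment_integral_eq_laplace_integral[OF sets fin mom lap \<phi>c] by (simp add: h_def)
qed

section \<open>Real monic quadratics\<close>

lemma monic_quadratic_of_real_root_iff:
  "(complex_of_real r)^2 + of_real f * of_real r + of_real e = 0 \<longleftrightarrow> r^2 + f * r + e = 0"
proof -
  have "(complex_of_real r)^2 + of_real f * of_real r + of_real e = of_real (r^2 + f * r + e)"
    by simp
  then show ?thesis by (simp only: of_real_eq_0_iff)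
qed

lemma real_monic_quadratic_cases:
  fixes f e :: real
  obtains (distinct) \<rho>\<^sub>1 \<rho>\<^sub>2 where "\<rho>\<^sub>1 \<noteq> \<rho>\<^sub>2" "\<And>k. k^2 + f * k + e = (k - \<rho>\<^sub>1) * (k - \<rho>\<^sub>2)"
  | (double) \<rho> where "\<And>k. k^2 + f * k + e = (k - \<rho>)^2"
  | (nonreal) c\<^sub>1 d\<^sub>1 where "d\<^sub>1 \<noteq> 0" "f = - 2 * c\<^sub>1" "e = c\<^sub>1^2 + d\<^sub>1^2"
proof -
  define \<Delta> where "\<Delta> = f^2 - 4 * e"
  consider "\<Delta> > 0" | "\<Delta> = 0" | "\<Delta> < 0" by linarith
  then show ?thesis
  proof cases
    case 1
    then show ?thesis
      by (intro distinct[of "(- f - sqrt \<Delta>) / 2" "(- f + sqrt \<Delta>) / 2"])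
         (simp_all add: \<Delta>_def field_simps power2_eq_square)
  next
    case 2
    then show ?thesis
      by (intro double[of "- f / 2"]) (simp add: \<Delta>_def field_simps power2_eq_square)
  next
    case 3
    then show ?thesis
      by (intro nonreal[of "sqrt (- \<Delta>) / 2" "- f / 2"]) (simp_all add: \<Delta>_def power_divide field_simps)
  qed
qed

lemma monic_quadratic_nonreal_root:
  fixes f e :: real and z :: complex
  assumes "z^2 + of_real f * z + of_real e = 0" "Im z \<noteq> 0"
  shows "f = - 2 * Re z" "e = (Re z)^2 + (Im z)^2"
proof -
  have "2 * Re z * Im z + f * Im z = 0" "(Re z)^2 - (Im z)^2 + f * Re z + e = 0"
    using assms(1) by (simp_all add: complex_eq_iff power2_eq_square algebra_simps)
  moreover from this(1) have "(2 * Re z + f) * Im z = 0" by (simp add: algebra_simps)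
  then have "f = - 2 * Re z" using assms(2) by simp
  ultimately show "f = - 2 * Re z" "e = (Re z)^2 + (Im z)^2"
    by (simp_all add: power2_eq_square algebra_simps)
qed

lemma monic_quadratic_complex_pair_roots:
  fixes c d :: real and z :: complex
  assumes "z^2 + of_real (- 2 * c) * z + of_real (c^2 + d^2) = 0" "d \<noteq> 0"
  shows "Re z = c"
proof (cases "Im z = 0")
  case True
  then have "(Re z - c)^2 + d^2 = 0"
    using assms(1) by (simp add: complex_eq_iff power2_eq_square algebra_simps)
  then show ?thesis using assms(2) by (simp add: sum_power2_eq_zero_iff)
next
  case False
  then show ?thesis using monic_quadratic_nonreal_root(1)[OF assms(1)] by simp
qed

lemma partial_fractions_two_quadratics:
  fixes c d f e :: real
  assumes d: "d \<noteq> 0" and fe: "(f, e) \<noteq> (- 2 * c, c^2 + d^2)"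
  obtains C D E F where "C \<noteq> 0 \<or> D \<noteq> 0"
    "\<And>k. (k - c)^2 + d^2 \<noteq> 0 \<Longrightarrow> k^2 + f * k + e \<noteq> 0 \<Longrightarrow>
       1 / (((k - c)^2 + d^2) * (k^2 + f * k + e)) =
       (C * k + D) / ((k - c)^2 + d^2) + (E * k + F) / (k^2 + f * k + e)"
proof -
  define a where "a = c^2 + f * c + e - d^2"
  define b where "b = 2 * c + f"
  define \<Delta> where "\<Delta> = a^2 + b^2 * d^2"
  have "\<Delta> \<noteq> 0"
  proof
    assume "\<Delta> = 0"
    then have "a = 0" "b = 0" using d unfolding \<Delta>_def by (auto simp: add_nonneg_eq_0_iff)
    then have "f = - 2 * c" by (simp add: b_def)
    with \<open>a = 0\<close> have "e = c^2 + d^2" by (simp add: a_def power2_eq_square)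
    with \<open>f = - 2 * c\<close> show False using fe by simp
  qed
  show ?thesis
  proof (rule that[of "- b / \<Delta>" "(a + b * c) / \<Delta>" "b / \<Delta>" "(b * b - a - b * c) / \<Delta>"])
    show "- b / \<Delta> \<noteq> 0 \<or> (a + b * c) / \<Delta> \<noteq> 0"
      using \<open>\<Delta> \<noteq> 0\<close> by (auto simp: \<Delta>_def)
    fix k :: real
    assume "(k - c)^2 + d^2 \<noteq> 0" "k^2 + f * k + e \<noteq> 0"
    moreover have "(a - b * (k - c)) * (k^2 + f * k + e) + (b * k + (b * b - a - b * c)) * ((k - c)^2 + d^2) = \<Delta>"
      unfolding a_def b_def \<Delta>_def by algebra
    moreover have "1 / (Q\<^sub>1 * Q\<^sub>2) = N\<^sub>1 / \<Delta> / Q\<^sub>1 + N\<^sub>2 / \<Delta> / Q\<^sub>2"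
      if "Q\<^sub>1 \<noteq> 0" "Q\<^sub>2 \<noteq> 0" "N\<^sub>1 * Q\<^sub>2 + N\<^sub>2 * Q\<^sub>1 = \<Delta>" for Q\<^sub>1 Q\<^sub>2 N\<^sub>1 N\<^sub>2 :: real
      using that \<open>\<Delta> \<noteq> 0\<close> by (simp add: field_simps)
    moreover have "(a - b * (k - c)) / \<Delta> = - b / \<Delta> * k + (a + b * c) / \<Delta>"
      "(b * k + (b * b - a - b * c)) / \<Delta> = b / \<Delta> * k + (b * b - a - b * c) / \<Delta>"
      by (simp_all add: diff_divide_distrib add_divide_distrib algebra_simps)
    ultimately show "1 / (((k - c)^2 + d^2) * (k^2 + f * k + e)) =
       (- b / \<Delta> * k + (a + b * c) / \<Delta>) / ((k - c)^2 + d^2) + (b / \<Delta> * k + (b * b - a - b * c) / \<Delta>) / (k^2 + f * k + e)"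
      by metis
  qed
qed

lemma partial_fractions_linear_quadratic:
  fixes k r c d :: real
  assumes "k \<noteq> r" "(k - c)^2 + d^2 \<noteq> 0" "(r - c)^2 + d^2 \<noteq> 0"
  defines "A \<equiv> 1 / ((r - c)^2 + d^2)"
  shows "A * (1 / (k - r)) + (- A * k + A * (2 * c - r)) / ((k - c)^2 + d^2) =
         1 / ((k - r) * ((k - c)^2 + d^2))"
proof -
  have "A * (1 / (k - r)) + (- A * k + A * (2 * c - r)) / ((k - c)^2 + d^2) =
      A * ((k - c)^2 + d^2 + (- k + (2 * c - r)) * (k - r)) / ((k - r) * ((k - c)^2 + d^2))"
    using assms(1,2) by (simp add: field_simps)
  also have "(k - c)^2 + d^2 + (- k + (2 * c - r)) * (k - r) = (r - c)^2 + d^2"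
    by (simp add: power2_eq_square algebra_simps)
  also have "A * ((r - c)^2 + d^2) = 1" using assms(3) by (simp add: A_def)
  finally show ?thesis .
qed

lemma hausdorff_moment_seq_inverse_linear:
  fixes r :: real
  assumes "r < 0"
  shows "hausdorff_moment_seq (\<lambda>n. 1 / (real n - r))"
proof (rule hausdorff_moment_seq_if_laplace_nonneg[where G="\<lambda>s. exp (r * s)"])
  show "has_laplace (\<lambda>s. exp (r * s)) (real n) (1 / (real n - r))" for n
    using assms by (intro has_laplace_exp) linarith
  show "1 / (real n - r) > 0" for n using assms by simp
qed simp_all

lemma exp_mult_cos_sin_le:
  fixes b c d s :: real
  assumes "b \<ge> 0" "d > 0" "s \<ge> 0"
  shows "exp (c * s) * (cos (d * s) + b / d * sin (d * s)) \<le> exp ((c + b) * s)"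
proof -
  have "cos (d * s) + b / d * sin (d * s) \<le> 1 + b / d * (d * s)"
    using assms by (intro add_mono mult_left_mono sin_x_le_x) auto
  also have "\<dots> \<le> exp (b * s)" using assms(2) by simp
  finally have "exp (c * s) * (cos (d * s) + b / d * sin (d * s)) \<le> exp (c * s) * exp (b * s)"
    by (rule mult_left_mono) simp
  then show ?thesis by (simp add: exp_add[symmetric] algebra_simps)
qed

lemma hausdorff_moment_seq_inverse_linear_quadratic:
  fixes r c d :: real
  assumes r: "c \<le> r" "r < 0" and d: "d > 0"
  shows "hausdorff_moment_seq (\<lambda>n. 1 / ((real n - r) * ((real n - c)^2 + d^2)))"
proof -
  define A where "A = 1 / ((r - c)^2 + d^2)"
  have "A > 0" using d by (simp add: A_def add_nonneg_pos)
  define G where "G s = A * exp (r * s) +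
      exp (c * s) * (- A * cos (d * s) + (- A * c + A * (2 * c - r)) / d * sin (d * s))" for s
  show ?thesis
  proof (rule hausdorff_moment_seq_if_laplace_nonneg[where G=G])
    show "G \<in> borel_measurable borel" unfolding G_def by measurable
    show "G s \<ge> 0" if "s > 0" for s
    proof -
      have "G s = A * (exp (r * s) - exp (c * s) * (cos (d * s) + (r - c) / d * sin (d * s)))"
        using d by (simp add: G_def field_simps)
      moreover have "exp (c * s) * (cos (d * s) + (r - c) / d * sin (d * s)) \<le> exp (r * s)"
        using exp_mult_cos_sin_le[of "r - c" d s c] r d that by simp
      ultimately show ?thesis using \<open>A > 0\<close> by simp
    qed
    fix n :: nat
    have "r < real n" "c < real n" using r by linarith+
    have "(real n - c)^2 + d^2 > 0" "(r - c)^2 + d^2 > 0" using d by (simp_all add: add_nonneg_pos)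
    then show "1 / ((real n - r) * ((real n - c)^2 + d^2)) > 0"
      using \<open>r < real n\<close> by simp
    show "has_laplace G (real n) (1 / ((real n - r) * ((real n - c)^2 + d^2)))"
    proof (rule has_laplace_cong)
      show "has_laplace G (real n) (A * (1 / (real n - r)) + (- A * real n + A * (2 * c - r)) / ((real n - c)^2 + d^2))"
        unfolding G_def using d \<open>r < real n\<close> \<open>c < real n\<close>
        by (intro has_laplace_add has_laplace_cmult has_laplace_exp has_laplace_exp_cos_sin) auto
      show "A * (1 / (real n - r)) + (- A * real n + A * (2 * c - r)) / ((real n - c)^2 + d^2)
          = 1 / ((real n - r) * ((real n - c)^2 + d^2))"
        unfolding A_def using \<open>r < real n\<close> \<open>(real n - c)^2 + d^2 > 0\<close> \<open>(r - c)^2 + d^2 > 0\<close>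
        by (intro partial_fractions_linear_quadratic) auto
    qed simp
  qed
qed

section \<open>Dominant oscillating terms\<close>

lemma smallo_cmult: "f \<in> o[F](g) \<Longrightarrow> (\<lambda>x. a * f x) \<in> o[F](g)"
  by (cases "a = 0") simp_all

lemma smallo_exp_exp:
  fixes \<rho> c :: real assumes "\<rho> < c"
  shows "(\<lambda>s. exp (\<rho> * s)) \<in> o[at_top](\<lambda>s. exp (c * s))"
    and "(\<lambda>s. s * exp (\<rho> * s)) \<in> o[at_top](\<lambda>s. exp (c * s))"
proof -
  have "((\<lambda>s. exp (- ((c - \<rho>) * s))) \<longlongrightarrow> 0) at_top" "((\<lambda>s. s * exp (- ((c - \<rho>) * s))) \<longlongrightarrow> 0) at_top"
    using assms by real_asymp+
  then show "(\<lambda>s. exp (\<rho> * s)) \<in> o[at_top](\<lambda>s. exp (c * s))"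
    "(\<lambda>s. s * exp (\<rho> * s)) \<in> o[at_top](\<lambda>s. exp (c * s))"
    by (auto intro!: smalloI_tendsto simp: exp_diff algebra_simps)
qed

lemma smallo_exp_cos_sin:
  fixes \<rho> c :: real assumes "\<rho> < c"
  shows "(\<lambda>s. exp (\<rho> * s) * (A * cos (d * s) + B * sin (d * s))) \<in> o[at_top](\<lambda>s. exp (c * s))"
proof (rule landau_o.big_small_trans[OF _ smallo_exp_exp(1)[OF assms]])
  have "\<bar>A * cos (d * s) + B * sin (d * s)\<bar> \<le> \<bar>A\<bar> + \<bar>B\<bar>" for s
    by (rule order_trans[OF abs_triangle_ineq])
       (intro add_mono; simp add: abs_mult mult_left_le)
  then show "(\<lambda>s. exp (\<rho> * s) * (A * cos (d * s) + B * sin (d * s))) \<in> O[at_top](\<lambda>s. exp (\<rho> * s))"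
    by (intro bigoI[where c="\<bar>A\<bar> + \<bar>B\<bar>"] always_eventually) (simp add: abs_mult mult.commute)
qed

lemma exp_oscillation_neg:
  fixes c d C D :: real and H :: "real \<Rightarrow> real"
  assumes d: "d > 0" and CD: "C \<noteq> 0 \<or> D \<noteq> 0" and H: "H \<in> o[at_top](\<lambda>s. exp (c * s))"
  obtains s where "s > 0" "exp (c * s) * (C * cos (d * s) + D * sin (d * s)) + H s < 0"
proof -
  define r where "r = sqrt (C^2 + D^2)"
  have r: "r > 0" using CD by (simp add: r_def sum_power2_gt_zero_iff)
  have "(- C / r)^2 + (- D / r)^2 = 1"
    using r CD by (simp add: r_def power_divide add_divide_distrib[symmetric])
  then obtain \<theta> where \<theta>: "- C / r = cos \<theta>" "- D / r = sin \<theta>"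
    using sincos_total_2pi by metis
  have r2: "r^2 = C^2 + D^2" by (simp add: r_def)
  have "C * cos \<theta> + D * sin \<theta> = - (r^2) / r"
    using r unfolding \<theta>[symmetric] r2 by (simp add: power2_eq_square field_simps)
  also have "\<dots> = - r" using r by (simp add: power2_eq_square)
  finally have val: "C * cos \<theta> + D * sin \<theta> = - r" .
  obtain S where S: "\<And>s. s \<ge> S \<Longrightarrow> \<bar>H s\<bar> \<le> r / 2 * exp (c * s)"
    using landau_o.smallD[OF H, of "r / 2"] r by (auto simp: eventually_at_top_linorder)
  define M where "M = max S 1"
  obtain k :: nat where k: "M * d / (2 * pi) - \<theta> / (2 * pi) < real k"
    using reals_Archimedean2 by blast
  define s where "s = (\<theta> + 2 * real k * pi) / d"
  have "M < s" using k d pi_gt_zero by (simp add: s_def field_simps)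
  then have "S \<le> s" "s > 0" by (auto simp: M_def)
  have "cos (d * s) = cos \<theta>" "sin (d * s) = sin \<theta>"
    using d by (simp_all add: s_def cos_add sin_add)
  then have "exp (c * s) * (C * cos (d * s) + D * sin (d * s)) + H s = - r * exp (c * s) + H s"
    by (simp add: val)
  also have "\<dots> \<le> - r * exp (c * s) + r / 2 * exp (c * s)"
    using S[OF \<open>S \<le> s\<close>] by simp
  also have "\<dots> < 0" using r by simp
  finally have "exp (c * s) * (C * cos (d * s) + D * sin (d * s)) + H s < 0" .
  with \<open>s > 0\<close> show ?thesis by (rule that)
qed

lemma not_hausdorff_moment_seq_oscillating:
  fixes c d C D :: real and H :: "real \<Rightarrow> real"
  assumes "d > 0" "C \<noteq> 0 \<or> D \<noteq> 0" "continuous_on UNIV H" "H \<in> o[at_top](\<lambda>s. exp (c * s))"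
    and "\<And>n. has_laplace (\<lambda>s. exp (c * s) * (C * cos (d * s) + D * sin (d * s)) + H s) (real n) (x n)"
  shows "\<not> hausdorff_moment_seq x"
proof -
  obtain s where "s > 0" "exp (c * s) * (C * cos (d * s) + D * sin (d * s)) + H s < 0"
    using exp_oscillation_neg assms(1,2,4) .
  moreover have "continuous_on UNIV (\<lambda>s. exp (c * s) * (C * cos (d * s) + D * sin (d * s)) + H s)"
    using assms(3) by (intro continuous_intros)
  ultimately show ?thesis
    using assms(5) not_hausdorff_moment_seq_if_laplace_neg by blast
qed

lemma laplace_inverse_monic_quadratic:
  fixes f e c E F :: real
  assumes roots: "\<And>z::complex. z^2 + of_real f * z + of_real e = 0 \<Longrightarrow> Re z < c"
  obtains H where "continuous_on UNIV H" "H \<in> o[at_top](\<lambda>s. exp (c * s))"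
    "\<And>k. k \<ge> c \<Longrightarrow> has_laplace H k ((E * k + F) / (k^2 + f * k + e))"
proof -
  have real_root: "\<rho> < c" if "\<rho>^2 + f * \<rho> + e = 0" for \<rho>
    using roots[of "of_real \<rho>"] that by (simp only: monic_quadratic_of_real_root_iff) simp
  show ?thesis
  proof (cases f e rule: real_monic_quadratic_cases)
    case (distinct \<rho>\<^sub>1 \<rho>\<^sub>2)
    let ?H = "\<lambda>s. (E * \<rho>\<^sub>1 + F) / (\<rho>\<^sub>1 - \<rho>\<^sub>2) * exp (\<rho>\<^sub>1 * s) + (E * \<rho>\<^sub>2 + F) / (\<rho>\<^sub>2 - \<rho>\<^sub>1) * exp (\<rho>\<^sub>2 * s)"
    have "\<rho>\<^sub>1 < c" "\<rho>\<^sub>2 < c" using real_root[of \<rho>\<^sub>1] real_root[of \<rho>\<^sub>2] by (simp_all add: distinct)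
    show ?thesis
    proof (rule that[of ?H])
      show "?H \<in> o[at_top](\<lambda>s. exp (c * s))"
        using \<open>\<rho>\<^sub>1 < c\<close> \<open>\<rho>\<^sub>2 < c\<close> by (intro sum_in_smallo smallo_cmult smallo_exp_exp)
      show "has_laplace ?H k ((E * k + F) / (k^2 + f * k + e))" if "k \<ge> c" for k
        unfolding distinct using distinct \<open>\<rho>\<^sub>1 < c\<close> \<open>\<rho>\<^sub>2 < c\<close> that by (intro has_laplace_exp_pair) auto
    qed (intro continuous_intros)
  next
    case (double \<rho>)
    let ?H = "\<lambda>s. E * exp (\<rho> * s) + (E * \<rho> + F) * (s * exp (\<rho> * s))"
    have "\<rho> < c" by (rule real_root) (simp add: double)
    show ?thesis
    proof (rule that[of ?H])
      show "?H \<in> o[at_top](\<lambda>s. exp (c * s))"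
        using \<open>\<rho> < c\<close> by (intro sum_in_smallo smallo_cmult smallo_exp_exp)
      show "has_laplace ?H k ((E * k + F) / (k^2 + f * k + e))" if "k \<ge> c" for k
        unfolding double using \<open>\<rho> < c\<close> that by (intro has_laplace_exp_double) auto
    qed (intro continuous_intros)
  next
    case (nonreal c\<^sub>1 d\<^sub>1)
    let ?H = "\<lambda>s. exp (c\<^sub>1 * s) * (E * cos (d\<^sub>1 * s) + (E * c\<^sub>1 + F) / d\<^sub>1 * sin (d\<^sub>1 * s))"
    have "(Complex c\<^sub>1 d\<^sub>1)^2 + of_real f * Complex c\<^sub>1 d\<^sub>1 + of_real e = 0"
      by (simp add: nonreal complex_eq_iff power2_eq_square algebra_simps)
    then have "c\<^sub>1 < c" using roots by fastforce
    have fac: "k^2 + f * k + e = (k - c\<^sub>1)^2 + d\<^sub>1^2" for k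
      by (simp add: nonreal power2_diff algebra_simps)
    show ?thesis
    proof (rule that[of ?H])
      show "?H \<in> o[at_top](\<lambda>s. exp (c * s))"
        using \<open>c\<^sub>1 < c\<close> by (rule smallo_exp_cos_sin)
      show "has_laplace ?H k ((E * k + F) / (k^2 + f * k + e))" if "k \<ge> c" for k
        unfolding fac using nonreal(1) \<open>c\<^sub>1 < c\<close> that by (intro has_laplace_exp_cos_sin) auto
    qed (intro continuous_intros)
  qed
qed

lemma real_monic_quadratic_roots_trichotomy:
  fixes f e c :: real
  obtains (real_root_above) r where "r^2 + f * r + e = 0" "c \<le> r"
  | (nonreal_root) z :: complex where "z^2 + of_real f * z + of_real e = 0" "Im z \<noteq> 0"
  | (roots_below) "\<And>z::complex. z^2 + of_real f * z + of_real e = 0 \<Longrightarrow> Re z < c"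
proof (cases "\<exists>z::complex. z^2 + of_real f * z + of_real e = 0 \<and> Re z \<ge> c")
  case True
  then obtain z :: complex where z: "z^2 + of_real f * z + of_real e = 0" "Re z \<ge> c" by blast
  show thesis
  proof (cases "Im z = 0")
    case True
    then have "z = of_real (Re z)" by (simp add: complex_eq_iff)
    then have "(Re z)^2 + f * Re z + e = 0"
      using z(1) by (metis monic_quadratic_of_real_root_iff)
    then show thesis using z(2) by (rule real_root_above)
  qed (use z(1) nonreal_root in blast)
qed (use roots_below in force)

text \<open>The pair \<open>c \<plusminus> i d\<close> has larger real part than the roots of the second factor, so its
  oscillating term dominates the inverse Laplace transform.\<close>
lemma not_hausdorff_moment_seq_dominant_pair:
  fixes c d f e :: real
  assumes c: "c < 0" and d: "d > 0"
    and roots: "\<And>z::complex. z^2 + of_real f * z + of_real e = 0 \<Longrightarrow> Re z < c"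
  shows "\<not> hausdorff_moment_seq (\<lambda>n. 1 / (((real n - c)^2 + d^2) * ((real n)^2 + f * real n + e)))"
proof -
  have "(f, e) \<noteq> (- 2 * c, c^2 + d^2)"
  proof
    assume "(f, e) = (- 2 * c, c^2 + d^2)"
    then have "(Complex c d)^2 + of_real f * Complex c d + of_real e = 0"
      by (simp add: complex_eq_iff power2_eq_square algebra_simps)
    then show False using roots by fastforce
  qed
  then obtain C D E F where CD: "C \<noteq> 0 \<or> D \<noteq> 0" and pf: "\<And>k. (k - c)^2 + d^2 \<noteq> 0 \<Longrightarrow>
      k^2 + f * k + e \<noteq> 0 \<Longrightarrow> 1 / (((k - c)^2 + d^2) * (k^2 + f * k + e)) =
        (C * k + D) / ((k - c)^2 + d^2) + (E * k + F) / (k^2 + f * k + e)"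
    using partial_fractions_two_quadratics d by (metis less_irrefl)
  obtain H where H: "continuous_on UNIV H" "H \<in> o[at_top](\<lambda>s. exp (c * s))"
    and lapH: "\<And>k. k \<ge> c \<Longrightarrow> has_laplace H k ((E * k + F) / (k^2 + f * k + e))"
    using laplace_inverse_monic_quadratic[OF roots] by blast
  show ?thesis
  proof (rule not_hausdorff_moment_seq_oscillating[OF d _ H])
    show "C \<noteq> 0 \<or> (C * c + D) / d \<noteq> 0" using CD d by auto
    fix n :: nat
    have "(real n - c)^2 + d^2 \<noteq> 0" using d by (simp add: add_nonneg_pos)
    moreover have "(real n)^2 + f * real n + e \<noteq> 0"
      using roots[of "of_real (real n)"] c by (auto simp only: monic_quadratic_of_real_root_iff) simp
    ultimately have "1 / (((real n - c)^2 + d^2) * ((real n)^2 + f * real n + e)) =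
        (C * real n + D) / ((real n - c)^2 + d^2) + (E * real n + F) / ((real n)^2 + f * real n + e)"
      by (intro pf)
    moreover have "has_laplace (\<lambda>s. exp (c * s) * (C * cos (d * s) + (C * c + D) / d * sin (d * s)) + H s)
        (real n) ((C * real n + D) / ((real n - c)^2 + d^2) + (E * real n + F) / ((real n)^2 + f * real n + e))"
      using c d by (intro has_laplace_add has_laplace_exp_cos_sin lapH) auto
    ultimately show "has_laplace (\<lambda>s. exp (c * s) * (C * cos (d * s) + (C * c + D) / d * sin (d * s)) + H s)
        (real n) (1 / (((real n - c)^2 + d^2) * ((real n)^2 + f * real n + e)))"
      by simp
  qed
qed

section \<open>Two conjugate pairs of roots\<close>

lemma not_hausdorff_moment_seq_equal_real_parts:
  fixes c a b :: real
  assumes c: "c < 0" and a: "0 < a" and ab: "a < b"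
  shows "\<not> hausdorff_moment_seq (\<lambda>n. 1 / (((real n - c)^2 + a^2) * ((real n - c)^2 + b^2)))"
proof -
  have b: "b > 0" and ba: "b^2 - a^2 > 0" using a ab by (auto simp: power_strict_mono)
  define K where "K = 1 / (b^2 - a^2)"
  define G where "G s = K / a * (exp (c * s) * sin (a * s)) - K / b * (exp (c * s) * sin (b * s))" for s
  have "has_laplace G (real n) (1 / (((real n - c)^2 + a^2) * ((real n - c)^2 + b^2)))" for n
  proof (rule has_laplace_cong)
    have "c < real n" using c by linarith
    then show "has_laplace G (real n) (K / a * (a / ((real n - c)^2 + a^2)) - K / b * (b / ((real n - c)^2 + b^2)))"
      unfolding G_def by (intro has_laplace_diff has_laplace_cmult has_laplace_exp_trig) simp
    have "K / a * (a / Q\<^sub>a) - K / b * (b / Q\<^sub>b) = 1 / (Q\<^sub>a * Q\<^sub>b)"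
      if "Q\<^sub>a > 0" "Q\<^sub>b > 0" "Q\<^sub>b - Q\<^sub>a = b^2 - a^2" for Q\<^sub>a Q\<^sub>b
    proof -
      have "K / a * (a / Q\<^sub>a) - K / b * (b / Q\<^sub>b) = K * (Q\<^sub>b - Q\<^sub>a) / (Q\<^sub>a * Q\<^sub>b)"
        using that a b by (simp add: field_simps)
      then show ?thesis using that(3) ba by (simp add: K_def)
    qed
    then show "K / a * (a / ((real n - c)^2 + a^2)) - K / b * (b / ((real n - c)^2 + b^2))
        = 1 / (((real n - c)^2 + a^2) * ((real n - c)^2 + b^2))"
      using a b by (simp add: add_nonneg_pos)
  qed simp
  moreover have "continuous_on UNIV G" unfolding G_def by (intro continuous_intros)
  moreover
  define m where "m = nat \<lfloor>b / a\<rfloor> + 1"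
  define s where "s = real m * pi / b"
  have "s > 0" using b by (simp add: s_def m_def)
  have "sin (b * s) = 0" using b by (simp add: s_def sin_npi)
  have "b / a < real m" "real m \<le> b / a + 1"
    using a b by (simp_all add: m_def) linarith+
  then have "pi < a * s" "a * s < 2 * pi"
    using a ab pi_gt_zero by (auto simp: s_def field_simps)
  then have "sin (a * s) < 0" by (rule sin_lt_zero)
  then have "G s < 0"
    using a ba \<open>sin (b * s) = 0\<close> by (simp add: G_def K_def mult_pos_neg divide_neg_pos)
  ultimately show ?thesis using \<open>s > 0\<close> by (intro not_hausdorff_moment_seq_if_laplace_neg[where G=G])
qed

lemma not_hausdorff_moment_seq_repeated_pair:
  fixes c d :: real
  assumes c: "c < 0" and d: "0 < d"
  shows "\<not> hausdorff_moment_seq (\<lambda>n. 1 / (((real n - c)^2 + d^2) * ((real n - c)^2 + d^2)))"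
proof -
  define K where "K = 1 / (2 * d^3)"
  define G where "G s = K * (exp (c * s) * sin (d * s)) - (K * d) * (s * exp (c * s) * cos (d * s))" for s
  have "has_laplace G (real n) (1 / (((real n - c)^2 + d^2) * ((real n - c)^2 + d^2)))" for n
  proof (rule has_laplace_cong)
    have "c < real n" using c by linarith
    then show "has_laplace G (real n)
        (K * (d / ((real n - c)^2 + d^2)) - (K * d) * (((real n - c)^2 - d^2) / ((real n - c)^2 + d^2)^2))"
      unfolding G_def by (intro has_laplace_diff has_laplace_cmult has_laplace_exp_trig has_laplace_mult_exp_cos)
    have "K * (d / Q) - (K * d) * ((u - d^2) / Q^2) = 1 / (Q * Q)" if "Q = u + d^2" "Q > 0" for Q u
    proof -
      have "K * (d / Q) - (K * d) * ((u - d^2) / Q^2) = K * d * (Q - (u - d^2)) / Q^2"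
        using that(2) by (simp add: field_simps power2_eq_square)
      also have "K * d * (Q - (u - d^2)) = 1" using that d by (simp add: K_def power2_eq_square power3_eq_cube)
      finally show ?thesis by (simp add: power2_eq_square)
    qed
    then show "K * (d / ((real n - c)^2 + d^2)) - (K * d) * (((real n - c)^2 - d^2) / ((real n - c)^2 + d^2)^2)
        = 1 / (((real n - c)^2 + d^2) * ((real n - c)^2 + d^2))"
      using d by (simp add: add_nonneg_pos)
  qed simp
  moreover have "continuous_on UNIV G" unfolding G_def by (intro continuous_intros)
  moreover have "G (2 * pi / d) < 0"
    using d pi_gt_zero by (simp add: G_def K_def mult_pos_neg)
  ultimately show ?thesis using d by (intro not_hausdorff_moment_seq_if_laplace_neg[where G=G]) simp_all
qed

lemma not_hausdorff_moment_seq_two_complex_pairs: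
  fixes c d c\<^sub>1 d\<^sub>1 :: real
  assumes c: "c < 0" "c\<^sub>1 < 0" and d: "d > 0" "d\<^sub>1 > 0"
  shows "\<not> hausdorff_moment_seq (\<lambda>n. 1 / (((real n - c)^2 + d^2) * ((real n - c\<^sub>1)^2 + d\<^sub>1^2)))"
proof -
  have shift: "(x - a)^2 + b^2 = x^2 + (- 2 * a) * x + (a^2 + b^2)" for x a b :: real
    by (simp add: power2_diff algebra_simps)
  have Re_roots: "Re z = a"
    if "z^2 + of_real (- 2 * a) * z + of_real (a^2 + b^2) = 0" "b > 0" for z :: complex and a b :: real
    using that by (intro monic_quadratic_complex_pair_roots) auto
  consider "c\<^sub>1 < c" | "c < c\<^sub>1" | "c\<^sub>1 = c" "d = d\<^sub>1" | "c\<^sub>1 = c" "d < d\<^sub>1" | "c\<^sub>1 = c" "d\<^sub>1 < d"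
    by linarith
  then show ?thesis
  proof cases
    case 1
    have "\<not> hausdorff_moment_seq
        (\<lambda>n. 1 / (((real n - c)^2 + d^2) * ((real n)^2 + (- 2 * c\<^sub>1) * real n + (c\<^sub>1^2 + d\<^sub>1^2))))"
      using Re_roots[OF _ d(2)] 1 by (intro not_hausdorff_moment_seq_dominant_pair[OF c(1) d(1)]) simp
    then show ?thesis by (simp only: shift not_False_eq_True)
  next
    case 2
    have "\<not> hausdorff_moment_seq
        (\<lambda>n. 1 / (((real n - c\<^sub>1)^2 + d\<^sub>1^2) * ((real n)^2 + (- 2 * c) * real n + (c^2 + d^2))))"
      using Re_roots[OF _ d(1)] 2 by (intro not_hausdorff_moment_seq_dominant_pair[OF c(2) d(2)]) simp
    then show ?thesis by (simp only: shift mult.commute not_False_eq_True)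
  next
    case 3
    then show ?thesis using not_hausdorff_moment_seq_repeated_pair[OF c(1) d(1)] by simp
  next
    case 4
    then show ?thesis using not_hausdorff_moment_seq_equal_real_parts[OF c(1) d(1)] by simp
  next
    case 5
    then show ?thesis
      using not_hausdorff_moment_seq_equal_real_parts[OF c(1) d(2)] by (simp add: mult.commute)
  qed
qed

lemma hausdorff_moment_seq_real_root_above:
  fixes c d f e r :: real
  assumes "c \<le> r" "r^2 + f * r + e = 0" "d > 0"
    and real_roots: "\<And>\<rho>. \<rho>^2 + f * \<rho> + e = 0 \<Longrightarrow> \<rho> < 0"
  shows "hausdorff_moment_seq (\<lambda>n. 1 / (((real n - c)^2 + d^2) * ((real n)^2 + f * real n + e)))"
proof -
  define r' where "r' = - f - r"
  have fac: "k^2 + f * k + e = (k - r') * (k - r)" for k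
    using assms(2) by (simp add: r'_def power2_eq_square algebra_simps)
  have "r < 0" "r' < 0" using real_roots[of r] real_roots[of r'] by (simp_all add: fac)
  then have "hausdorff_moment_seq (\<lambda>n. 1 / (real n - r') * (1 / ((real n - r) * ((real n - c)^2 + d^2))))"
    using assms(1,3)
    by (intro hausdorff_moment_seq_mult hausdorff_moment_seq_inverse_linear
        hausdorff_moment_seq_inverse_linear_quadratic)
  moreover have "(\<lambda>n. 1 / (((real n - c)^2 + d^2) * ((real n)^2 + f * real n + e))) =
      (\<lambda>n. 1 / (real n - r') * (1 / ((real n - r) * ((real n - c)^2 + d^2))))"
    by (simp add: fac mult_ac)
  ultimately show ?thesis by simp
qed

lemma hausdorff_moment_seq_quartic_iff:
  fixes c d f e :: real
  assumes c: "c < 0" and d: "d > 0"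
    and roots: "\<And>z::complex. z^2 + of_real f * z + of_real e = 0 \<Longrightarrow> Re z < 0"
  shows "hausdorff_moment_seq (\<lambda>n. 1 / (((real n - c)^2 + d^2) * ((real n)^2 + f * real n + e))) \<longleftrightarrow>
         (\<exists>r. r^2 + f * r + e = 0 \<and> c \<le> r)"
proof -
  have real_roots: "r < 0" if "r^2 + f * r + e = 0" for r
    using roots[of "of_real r"] that by (simp only: monic_quadratic_of_real_root_iff) simp
  show ?thesis
  proof (cases f e c rule: real_monic_quadratic_roots_trichotomy)
    case (real_root_above r)
    then show ?thesis using d real_roots by (blast intro: hausdorff_moment_seq_real_root_above)
  next
    case (nonreal_root z)
    note fe = monic_quadratic_nonreal_root[OF nonreal_root]
    have "Re z < 0" using roots nonreal_root(1) .
    have sq: "x^2 + f * x + e = (x - Re z)^2 + \<bar>Im z\<bar>^2" for x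
      by (simp add: fe power2_diff algebra_simps)
    have "\<bar>Im z\<bar> > 0" using nonreal_root(2) by simp
    then have "\<not> hausdorff_moment_seq (\<lambda>n. 1 / (((real n - c)^2 + d^2) * ((real n - Re z)^2 + \<bar>Im z\<bar>^2)))"
      by (rule not_hausdorff_moment_seq_two_complex_pairs[OF c \<open>Re z < 0\<close> d])
    moreover have "(x - Re z)^2 + \<bar>Im z\<bar>^2 \<noteq> 0" for x
      using \<open>\<bar>Im z\<bar> > 0\<close> by (simp add: add_nonneg_pos)
    ultimately show ?thesis by (simp only: sq) simp
  next
    case roots_below
    have "r < c" if "r^2 + f * r + e = 0" for r
      using roots_below[of "of_real r"] that by (simp only: monic_quadratic_of_real_root_iff) simp
    then have "\<not> (\<exists>r. r^2 + f * r + e = 0 \<and> c \<le> r)" by (meson not_less)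
    then show ?thesis using not_hausdorff_moment_seq_dominant_pair[OF c d roots_below] by blast
  qed
qed

lemma poly_map_monic_quartic:
  fixes p :: "real poly" and z :: "'a::{comm_ring_1,real_algebra_1}"
  assumes "degree p = 4" "lead_coeff p = 1"
  shows "poly (map_poly of_real p) z = z^4 + of_real (coeff p 3) * z^3 + of_real (coeff p 2) * z^2
           + of_real (coeff p 1) * z + of_real (coeff p 0)"
proof -
  have "degree (map_poly (of_real :: real \<Rightarrow> 'a) p) = 4"
    using assms by (subst degree_map_poly) auto
  then show ?thesis
    using assms by (simp add: poly_altdef coeff_map_poly numeral_eq_Suc atMost_Suc algebra_simps)
qed

text \<open>Division by the real quadratic with roots \<open>\<alpha>, \<alpha>\<^sup>*\<close> leaves a real linear remainder,
  which vanishes at the non-real point \<open>\<alpha>\<close> and hence is zero.\<close>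
lemma monic_quartic_conj_pair_factor:
  fixes p :: "real poly" and \<alpha> :: complex
  assumes deg: "degree p = 4" and lc: "lead_coeff p = 1"
    and root: "poly (map_poly of_real p) \<alpha> = 0" and im: "Im \<alpha> \<noteq> 0"
  obtains f e :: real where
    "\<And>z. poly (map_poly complex_of_real p) z =
       ((z - of_real (Re \<alpha>))^2 + of_real ((Im \<alpha>)^2)) * (z^2 + of_real f * z + of_real e)"
    "\<And>x. poly p x = ((x - Re \<alpha>)^2 + (Im \<alpha>)^2) * (x^2 + f * x + e)"
proof -
  define c where "c = Re \<alpha>"
  define N where "N = (Re \<alpha>)^2 + (Im \<alpha>)^2"
  define f where "f = coeff p 3 + 2 * c"
  define e where "e = coeff p 2 - N + 2 * c * f"
  define R\<^sub>1 where "R\<^sub>1 = coeff p 1 - (N * f - 2 * c * e)"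
  define R\<^sub>0 where "R\<^sub>0 = coeff p 0 - N * e"
  have division: "poly (map_poly of_real p) z =
      (z^2 - 2 * of_real c * z + of_real N) * (z^2 + of_real f * z + of_real e) + of_real R\<^sub>1 * z + of_real R\<^sub>0"
    for z :: "'b::{comm_ring_1,real_algebra_1}"
    unfolding poly_map_monic_quartic[OF deg lc] R\<^sub>1_def R\<^sub>0_def e_def f_def
    by (simp add: algebra_simps power2_eq_square power3_eq_cube power4_eq_xxxx)
  have "\<alpha>^2 - 2 * of_real c * \<alpha> + of_real N = 0"
    by (simp add: complex_eq_iff c_def N_def power2_eq_square algebra_simps)
  then have "of_real R\<^sub>1 * \<alpha> + of_real R\<^sub>0 = 0" using root division[of \<alpha>] by simp
  then have "R\<^sub>1 * Im \<alpha> = 0" "R\<^sub>1 * Re \<alpha> + R\<^sub>0 = 0" by (simp_all add: complex_eq_iff)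
  with im have "R\<^sub>1 = 0" "R\<^sub>0 = 0" by simp_all
  moreover have "map_poly of_real p = p" by (simp add: map_poly_idI)
  ultimately show ?thesis
    using division[of "z :: complex" for z] division[of "x :: real" for x]
    by (intro that) (simp_all add: c_def N_def power2_eq_square algebra_simps)
qed

theorem mainTheorem8:
  fixes p :: "real poly" and \<alpha> :: complex
  assumes "degree p = 4"
    and "lead_coeff p = 1"
    and "\<forall>z. poly (map_poly complex_of_real p) z = 0 \<longrightarrow> Re z < 0"
    and "poly (map_poly complex_of_real p) \<alpha> = 0"
    and "Im \<alpha> \<noteq> 0"
  shows "hausdorff_moment_seq (\<lambda>n. 1 / poly p (real n)) \<longleftrightarrow>
         (\<exists>r::real. poly p r = 0 \<and> Re \<alpha> \<le> r)"
proof -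
  obtain f e where fac: "\<And>z. poly (map_poly complex_of_real p) z =
       ((z - of_real (Re \<alpha>))^2 + of_real ((Im \<alpha>)^2)) * (z^2 + of_real f * z + of_real e)"
    and fac_real: "\<And>x. poly p x = ((x - Re \<alpha>)^2 + \<bar>Im \<alpha>\<bar>^2) * (x^2 + f * x + e)"
    using monic_quartic_conj_pair_factor[OF assms(1,2,4,5)] by (metis power2_abs)
  have "Re \<alpha> < 0" "\<bar>Im \<alpha>\<bar> > 0" using assms(3-5) by auto
  moreover have "Re z < 0" if "z^2 + of_real f * z + of_real e = 0" for z :: complex
    using assms(3) fac[of z] that by simp
  moreover have "poly p r = 0 \<longleftrightarrow> r^2 + f * r + e = 0" for r
    using \<open>\<bar>Im \<alpha>\<bar> > 0\<close> by (simp add: fac_real add_nonneg_pos)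
  ultimately show ?thesis
    using hausdorff_moment_seq_quartic_iff[of "Re \<alpha>" "\<bar>Im \<alpha>\<bar>" f e] by (simp add: fac_real)
qed

end
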